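(* A quasi-order is unary FA-presentable if and only if it is isomorphic to one obtained by propagating a unary FA-foundational quasi-order $(Q,\le)$ in which every seed $P_k=\{p^{(k)}_1,\dots,p^{(k)}_5\}$ is either an anti-chain (no two distinct $p^{(k)}_i$ are comparable), an ascending chain ($p^{(k)}_1<p^{(k)}_2<p^{(k)}_3<p^{(k)}_4<p^{(k)}_5$), a descending chain ($p^{(k)}_1>p^{(k)}_2>p^{(k)}_3>p^{(k)}_4>p^{(k)}_5$), or a strongly connected component ($p^{(k)}_i\le p^{(k)}_j$ for all $i,j\in\{1,\dots,5\}$).
   Context: A quasi-order is a reflexive transitive binary relation; $x<y$ means $x\le y$ and not $y\le x$. A structure is unary FA-presentable if there exist a regular language $L\subseteq a^*$ and a surjection $\phi:L\to X$ such that for equality and for the relation, the set of pairs $(u,v)\in L^2$ whose images are related is regular (i.e. the set of words $\mathrm{conv}(u,v)$ over $\{a,\$\}^2$, reading both words in parallel with the shorter padded by $\$$, is a regular language). A unary FA-foundational binary relation is a finite set $Q$ with a relation $\rho$ and pairwise disjoint five-element subsets (seeds) $P_k=\{p^{(k)}_1,\dots,p^{(k)}_5\}$, $0\le k\le n-1$ ($n\ge0$), such that with $Q'=Q\setminus\bigcup_k P_k$, for all $k,l$ (possibly equal) and $q\in Q'$: (1) the statements $p^{(k)}_i\rho p^{(l)}_i$ ($1\le i\le5$) are all true or all false; (2) the statements $p^{(k)}_i\rho p^{(l)}_{i+1}$ ($1\le i\le4$) are all true or all false; (3) the statements $p^{(k)}_{i+1}\rho p^{(l)}_i$ ($1\le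 i\le 4$) are all true or all false; (4) the statements $p^{(k)}_i\rho p^{(l)}_j$ with $j-i\ge2$ are all true or all false; (5) the statements $p^{(k)}_j\rho p^{(l)}_i$ with $j-i\ge2$ are all true or all false; (6) the statements $q\rho p^{(k)}_i$ ($2\le i\le5$) are all true or all false; (7) the statements $p^{(k)}_i\rho q$ ($2\le i\le 5$) are all true or all false. A unary FA-foundational quasi-order is one in which $\rho$ is a quasi-order on $Q$. Propagation yields $(\hat Q,\hat\rho)$ with $\hat Q=Q'\cup\{p^{(k)}_i:0\le k<n,\ i\in\mathbb{N}\}$ ($\mathbb{N}=\{1,2,\dots\}$, new elements for $i\ge6$) and: $\hat\rho=\rho$ on $Q'$; $p^{(k)}_i\hat\rho p^{(l)}_j$ iff [$j=i$ and $p^{(k)}_1\rho p^{(l)}_1$] or [$j=i+1$ and $p^{(k)}_1\rho p^{(l)}_2$] or [$j=i-1$ and $p^{(k)}_2\rho p^{(l)}_1$] or [$j\ge i+2$ and $p^{(k)}_1\rho p^{(l)}_3$] or [$j\le i-2$ and $p^{(k)}_3\rho p^{(l)}_1$]; for $q\in Q'$: $q\hat\rho p^{(k)}_1$ iff $q\rho p^{(k)}_1$, $q\hat\rho p^{(k)}_i$ ($i\ge2$) iff $q\rho p^{(k)}_2$, $p^{(k)}_1\hat\rho q$ iff $p^{(k)}_1\rho q$, $p^{(k)}_i\hat\rho q$ ($i\ge2$) iff $p^{(k)}_2\rho q$. *)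

theory Defs
  imports Main
begin

definition regular_lang :: "'c list set \<Rightarrow> bool" where
  "regular_lang L \<longleftrightarrow>
     (\<exists>(S::nat set) (\<delta>::nat \<Rightarrow> 'c \<Rightarrow> nat) q0 F.
        finite S \<and> q0 \<in> S \<and> (\<forall>q\<in>S. \<forall>c. \<delta> q c \<in> S) \<and> F \<subseteq> S \<and>
        L = {w. foldl \<delta> q0 w \<in> F})"

text \<open>Unary words a^n are identified with natural numbers n. In the convolution alphabet, a padded letter is a boolean
(True = a, False = the padding symbol \$); a convolution letter is a pair.\<close>

definition unary_word :: "nat \<Rightarrow> unit list" where
  "unary_word n = replicate n ()"

definition conv :: "nat \<Rightarrow> nat \<Rightarrow> (bool \<times> bool) list" where
  "conv m n = map (\<lambda>i. (i < m, i < n)) [0..<max m n]"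

definition unary_FA_presentable :: "'a set \<Rightarrow> ('a \<Rightarrow> 'a \<Rightarrow> bool) \<Rightarrow> bool" where
  "unary_FA_presentable X R \<longleftrightarrow>
     (\<exists>(L::nat set) (\<phi>::nat \<Rightarrow> 'a).
        regular_lang (unary_word ` L) \<and> \<phi> ` L = X \<and>
        regular_lang {conv u v | u v. u \<in> L \<and> v \<in> L \<and> \<phi> u = \<phi> v} \<and>
        regular_lang {conv u v | u v. u \<in> L \<and> v \<in> L \<and> R (\<phi> u) (\<phi> v)})"

definition quasi_order_on :: "'a set \<Rightarrow> ('a \<Rightarrow> 'a \<Rightarrow> bool) \<Rightarrow> bool" where
  "quasi_order_on X R \<longleftrightarrow>
     (\<forall>x\<in>X. R x x) \<and> (\<forall>x\<in>X. \<forall>y\<in>X. \<forall>z\<in>X. R x y \<longrightarrow> R y z \<longrightarrow> R x z)"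

definition strictly :: "('a \<Rightarrow> 'a \<Rightarrow> bool) \<Rightarrow> 'a \<Rightarrow> 'a \<Rightarrow> bool" where
  "strictly R x y \<longleftrightarrow> R x y \<and> \<not> R y x"

definition isomorphic ::
  "'a set \<Rightarrow> ('a \<Rightarrow> 'a \<Rightarrow> bool) \<Rightarrow> 'b set \<Rightarrow> ('b \<Rightarrow> 'b \<Rightarrow> bool) \<Rightarrow> bool" where
  "isomorphic X R Y S \<longleftrightarrow>
     (\<exists>f. bij_betw f X Y \<and> (\<forall>x\<in>X. \<forall>y\<in>X. R x y \<longleftrightarrow> S (f x) (f y)))"

text \<open>Elements of Q are encoded in the type nat + nat \<times> nat: the non-seed part Q'
consists of elements Inl q (q in a finite set Q' of naturals), and the seed
element p^(k)_i is Inr (k, i). This is the same as an arbitrary finite Q with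
pairwise disjoint five-element labelled seeds, up to renaming.\<close>

type_synonym elt = "nat + nat \<times> nat"

abbreviation seed :: "nat \<Rightarrow> nat \<Rightarrow> elt" where
  "seed k i \<equiv> Inr (k, i)"

definition found_carrier :: "nat set \<Rightarrow> nat \<Rightarrow> elt set" where
  "found_carrier Q' n = Inl ` Q' \<union> {seed k i | k i. k < n \<and> 1 \<le> i \<and> i \<le> 5}"

definition FA_foundational :: "nat set \<Rightarrow> nat \<Rightarrow> (elt \<Rightarrow> elt \<Rightarrow> bool) \<Rightarrow> bool" where
  "FA_foundational Q' n \<rho> \<longleftrightarrow> finite Q' \<and>
    (\<forall>k<n. \<forall>l<n.
      (\<forall>i\<in>{1..5}. \<forall>j\<in>{1..5}. \<rho> (seed k i) (seed l i) = \<rho> (seed k j) (seed l j)) \<and>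
      (\<forall>i\<in>{1..4}. \<forall>j\<in>{1..4}.
          \<rho> (seed k i) (seed l (i+1)) = \<rho> (seed k j) (seed l (j+1))) \<and>
      (\<forall>i\<in>{1..4}. \<forall>j\<in>{1..4}.
          \<rho> (seed k (i+1)) (seed l i) = \<rho> (seed k (j+1)) (seed l j)) \<and>
      (\<forall>i\<in>{1..5}. \<forall>j\<in>{1..5}. \<forall>i'\<in>{1..5}. \<forall>j'\<in>{1..5}.
          i + 2 \<le> j \<longrightarrow> i' + 2 \<le> j' \<longrightarrow>
          \<rho> (seed k i) (seed l j) = \<rho> (seed k i') (seed l j')) \<and>
      (\<forall>i\<in>{1..5}. \<forall>j\<in>{1..5}. \<forall>i'\<in>{1..5}. \<forall>j'\<in>{1..5}.
          i + 2 \<le> j \<longrightarrow> i' + 2 \<le> j' \<longrightarrow>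
          \<rho> (seed k j) (seed l i) = \<rho> (seed k j') (seed l i'))) \<and>
    (\<forall>k<n. \<forall>q\<in>Q'. \<forall>i\<in>{2..5}. \<forall>j\<in>{2..5}.
      \<rho> (Inl q) (seed k i) = \<rho> (Inl q) (seed k j) \<and>
      \<rho> (seed k i) (Inl q) = \<rho> (seed k j) (Inl q))"

definition FA_foundational_quasi_order :: "nat set \<Rightarrow> nat \<Rightarrow> (elt \<Rightarrow> elt \<Rightarrow> bool) \<Rightarrow> bool" where
  "FA_foundational_quasi_order Q' n \<rho> \<longleftrightarrow>
     FA_foundational Q' n \<rho> \<and> quasi_order_on (found_carrier Q' n) \<rho>"

definition prop_carrier :: "nat set \<Rightarrow> nat \<Rightarrow> elt set" where
  "prop_carrier Q' n = Inl ` Q' \<union> {seed k i | k i. k < n \<and> 1 \<le> i}"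

fun prop_rel :: "(elt \<Rightarrow> elt \<Rightarrow> bool) \<Rightarrow> elt \<Rightarrow> elt \<Rightarrow> bool" where
  "prop_rel \<rho> (Inl q) (Inl q') = \<rho> (Inl q) (Inl q')"
| "prop_rel \<rho> (Inr (k, i)) (Inr (l, j)) =
     ((j = i \<and> \<rho> (seed k 1) (seed l 1)) \<or>
      (j = i + 1 \<and> \<rho> (seed k 1) (seed l 2)) \<or>
      (j + 1 = i \<and> \<rho> (seed k 2) (seed l 1)) \<or>
      (i + 2 \<le> j \<and> \<rho> (seed k 1) (seed l 3)) \<or>
      (j + 2 \<le> i \<and> \<rho> (seed k 3) (seed l 1)))"
| "prop_rel \<rho> (Inl q) (Inr (k, i)) =
     (if i = 1 then \<rho> (Inl q) (seed k 1) else \<rho> (Inl q) (seed k 2))"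
| "prop_rel \<rho> (Inr (k, i)) (Inl q) =
     (if i = 1 then \<rho> (seed k 1) (Inl q) else \<rho> (seed k 2) (Inl q))"

definition seed_antichain :: "(elt \<Rightarrow> elt \<Rightarrow> bool) \<Rightarrow> nat \<Rightarrow> bool" where
  "seed_antichain \<rho> k \<longleftrightarrow>
     (\<forall>i\<in>{1..5}. \<forall>j\<in>{1..5}. i \<noteq> j \<longrightarrow> \<not> \<rho> (seed k i) (seed k j))"

definition seed_ascending :: "(elt \<Rightarrow> elt \<Rightarrow> bool) \<Rightarrow> nat \<Rightarrow> bool" where
  "seed_ascending \<rho> k \<longleftrightarrow> (\<forall>i\<in>{1..4}. strictly \<rho> (seed k i) (seed k (i+1)))"

definition seed_descending :: "(elt \<Rightarrow> elt \<Rightarrow> bool) \<Rightarrow> nat \<Rightarrow> bool" where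
  "seed_descending \<rho> k \<longleftrightarrow> (\<forall>i\<in>{1..4}. strictly \<rho> (seed k (i+1)) (seed k i))"

definition seed_scc :: "(elt \<Rightarrow> elt \<Rightarrow> bool) \<Rightarrow> nat \<Rightarrow> bool" where
  "seed_scc \<rho> k \<longleftrightarrow> (\<forall>i\<in>{1..5}. \<forall>j\<in>{1..5}. \<rho> (seed k i) (seed k j))"

end

theory Submission
  imports Defs "HOL-Number_Theory.Cong"
begin

(*
  A deterministic automaton reading a unary word, or the convolution of two unary words, moves
  along a lasso: a path of T states running into a cycle of P states.  So a set of numbers is a
  regular unary language iff membership of m depends only on the lasso position of m, and a
  relation on numbers is regular iff its value at (m, n) depends only on which of m, n is larger
  and on the lasso positions of min m n and of |m - n|.

  Given a presentation, fix one lasso with 0 < T <= P that serves the domain, the equality and the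
  order, and keep the least word of every element.  Above N = 2T + P the kept words form a set
  that is periodic modulo P: its elements below N make up Q', and each residue class above N is a
  seed whose i-th element is the i-th word of the class.  Lasso invariance of the order says that
  comparisons between seed elements only depend on the seeds and on the difference of the
  indices capped at 2, i.e. the order is its own propagation; since the offsets P and 2P have the
  same lasso position, each seed is moreover an antichain, a chain or a strongly connected set.
  Conversely, the propagation of any relation with finite Q' is presented by placing Q' below a
  bound M and the seed elements round-robin above M; with T = M + 2n + 1 and P = n the resulting
  relations are lasso invariant, hence regular.
*)

section \<open>Lasso positions\<close>

definition lasso :: "nat \<Rightarrow> nat \<Rightarrow> nat \<Rightarrow> nat" where
  "lasso T P x = (if x < T then x else T + (x - T) mod P)"

definition lasso_step :: "nat \<Rightarrow> nat \<Rightarrow> nat \<Rightarrow> nat" where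
  "lasso_step T P y = (if Suc y < T + P then Suc y else T)"

lemma lasso_less: "x < T \<Longrightarrow> lasso T P x = x"
  by (simp add: lasso_def)

lemma lasso_0 [simp]: "lasso T P 0 = 0"
  by (simp add: lasso_def)

lemma lasso_less_bound: "0 < P \<Longrightarrow> lasso T P x < T + P"
  by (simp add: lasso_def)

lemma lasso_eq_iff:
  assumes "0 < P"
  shows "lasso T P x = lasso T P y \<longleftrightarrow> x = y \<or> (T \<le> x \<and> T \<le> y \<and> x mod P = y mod P)"
proof -
  have "(x - T) mod P = (y - T) mod P \<longleftrightarrow> x mod P = y mod P" if "T \<le> x" "T \<le> y"
    using that cong_add_rcancel_nat[of "x - T" T "y - T" P] by (simp add: cong_def)
  then show ?thesis
    using mod_less_divisor[OF assms] by (auto simp: lasso_def)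
qed

lemma lasso_eqI: "T \<le> x \<Longrightarrow> T \<le> y \<Longrightarrow> x mod P = y mod P \<Longrightarrow> lasso T P x = lasso T P y"
  using cong_add_rcancel_nat[of "x - T" T "y - T" P] by (simp add: lasso_def cong_def)

lemma lasso_Suc:
  assumes "0 < P"
  shows "lasso T P (Suc x) = lasso_step T P (lasso T P x)"
proof (cases "T \<le> x")
  case True
  then have "Suc x - T = Suc (x - T)"
    by simp
  then show ?thesis
    using True mod_less_divisor[OF assms, of "x - T"]
    by (auto simp: lasso_def lasso_step_def mod_Suc)
qed (auto simp: lasso_def lasso_step_def)

lemma funpow_lasso_step: "0 < P \<Longrightarrow> (lasso_step T P ^^ k) 0 = lasso T P k"
  by (induction k) (simp_all add: lasso_Suc)

lemma lasso_refine:
  assumes "0 < P" "0 < P'" "T \<le> T'" "P dvd P'" "lasso T' P' x = lasso T' P' y"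
  shows "lasso T P x = lasso T P y"
  using assms lasso_eq_iff[of P' T' x y] lasso_eq_iff[of P T x y]
  by (metis le_trans mod_mod_cancel)

lemma lasso_add:
  assumes "0 < P" "lasso T P x = lasso T P x'" "lasso T P y = lasso T P y'"
  shows "lasso T P (x + y) = lasso T P (x' + y')"
proof -
  have "x = x' \<or> (T \<le> x \<and> T \<le> x' \<and> x mod P = x' mod P)"
    "y = y' \<or> (T \<le> y \<and> T \<le> y' \<and> y mod P = y' mod P)"
    using assms lasso_eq_iff by blast+
  then have "x + y = x' + y' \<or> (T \<le> x + y \<and> T \<le> x' + y' \<and> (x + y) mod P = (x' + y') mod P)"
    by (auto intro: mod_add_cong)
  then show ?thesis
    using lasso_eq_iff[OF assms(1)] by blast
qed

lemma lasso_eq_0_iff: "0 < T \<Longrightarrow> lasso T P x = 0 \<longleftrightarrow> x = 0"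
  by (simp add: lasso_def)

lemma lasso_mod: "0 < P \<Longrightarrow> lasso T P x mod P = x mod P"
  by (auto simp: lasso_def mod_add_right_eq)

lemma lasso_lasso: "0 < P \<Longrightarrow> lasso T P (lasso T P x) = lasso T P x"
  by (cases "x < T") (auto simp: lasso_less intro: lasso_eqI simp: lasso_mod lasso_def)

definition lasso_invariant :: "nat \<Rightarrow> nat \<Rightarrow> (nat \<Rightarrow> 'b) \<Rightarrow> bool" where
  "lasso_invariant T P f \<longleftrightarrow> (\<forall>x y. lasso T P x = lasso T P y \<longrightarrow> f x = f y)"

lemma lasso_invariantD: "lasso_invariant T P f \<Longrightarrow> lasso T P x = lasso T P y \<Longrightarrow> f x = f y"
  unfolding lasso_invariant_def by blast

lemma lasso_invariant_refine:
  "lasso_invariant T P f \<Longrightarrow> 0 < P \<Longrightarrow> 0 < P' \<Longrightarrow> T \<le> T' \<Longrightarrow> P dvd P' \<Longrightarrow>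
   lasso_invariant T' P' f"
  unfolding lasso_invariant_def by (meson lasso_refine)

lemma funpow_lasso_invariant:
  assumes "finite S" "x0 \<in> S" "g ` S \<subseteq> S"
  shows "\<exists>T P. 0 < P \<and> lasso_invariant T P (\<lambda>k. (g ^^ k) x0)"
proof -
  define h where "h k = (g ^^ k) x0" for k
  have "h k \<in> S" for k
    unfolding h_def by (induction k) (use assms(2,3) in auto)
  then have "\<not> inj_on h {..card S}"
    using card_inj_on_le[of h "{..card S}" S] assms(1) by fastforce
  then obtain a b where ab: "a < b" "h a = h b"
    unfolding inj_on_def by (metis linorder_neqE_nat)
  define P where "P = b - a"
  have P: "0 < P"
    using ab by (simp add: P_def)
  have periodic: "h (m + s * P) = h m" if "a \<le> m" for m s
  proof (induction s)
    case (Suc s)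
    have "m + Suc s * P = (m + s * P - a) + b"
      using that ab by (simp add: P_def)
    then have "h (m + Suc s * P) = (g ^^ (m + s * P - a)) (h b)"
      by (simp add: h_def funpow_add)
    also have "\<dots> = (g ^^ (m + s * P - a)) (h a)"
      using ab by simp
    also have "\<dots> = h (m + s * P - a + a)"
      by (simp add: h_def funpow_add)
    also have "\<dots> = h (m + s * P)"
      using that by simp
    finally show ?case
      using Suc by simp
  qed simp
  have ordered: "h x = h y" if xy: "a \<le> x" "x \<le> y" "x mod P = y mod P" for x y
  proof -
    obtain s where "y = x + P * s"
      using mod_eq_nat2E[OF xy(3,2)] .
    then show ?thesis
      using periodic[OF xy(1), of s] by (simp add: mult.commute)
  qed
  have "h x = h y" if "lasso a P x = lasso a P y" for x y
  proof (cases "x = y")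
    case False
    then have "a \<le> x" "a \<le> y" "x mod P = y mod P"
      using that lasso_eq_iff[OF P] by blast+
    then show ?thesis
      using ordered[of x y] ordered[of y x] by (cases "x \<le> y") (simp_all add: eq_commute)
  qed simp
  then show ?thesis
    using P unfolding lasso_invariant_def h_def by blast
qed

lemma lasso_invariant_common:
  assumes "finite S" "\<forall>q\<in>S. \<exists>T P. 0 < P \<and> lasso_invariant T P (f q)"
  shows "\<exists>T P. 0 < P \<and> (\<forall>q\<in>S. lasso_invariant T P (f q))"
  using assms
proof (induction S rule: finite_induct)
  case empty
  show ?case
    by (rule exI[of _ 0], rule exI[of _ 1]) simp
next
  case (insert x S)
  then obtain T P where "0 < P" "\<forall>q\<in>S. lasso_invariant T P (f q)"
    by auto
  moreover obtain T' P' where "0 < P'" "lasso_invariant T' P' (f x)"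
    using insert.prems by auto
  moreover have PP': "0 < P * P'"
    using \<open>0 < P\<close> \<open>0 < P'\<close> by simp
  moreover have "lasso_invariant (T + T') (P * P') g" if "lasso_invariant T P g" for g
    using lasso_invariant_refine[OF that \<open>0 < P\<close> PP'] by simp
  moreover have "lasso_invariant (T + T') (P * P') g" if "lasso_invariant T' P' g" for g
    using lasso_invariant_refine[OF that \<open>0 < P'\<close> PP'] by simp
  ultimately show ?case
    by blast
qed

lemma dfa_iterates_lasso_invariant:
  fixes \<delta> :: "'s \<Rightarrow> 'c::finite \<Rightarrow> 's"
  assumes "finite S" "\<forall>q\<in>S. \<forall>c. \<delta> q c \<in> S"
  shows "\<exists>T P. 0 < P \<and> (\<forall>c. \<forall>q\<in>S. lasso_invariant T P (\<lambda>x. ((\<lambda>q. \<delta> q c) ^^ x) q))"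
proof -
  define f where "f = (\<lambda>(c, q) x. ((\<lambda>q. \<delta> q c) ^^ x) q)"
  have closed: "(\<lambda>q. \<delta> q c) ` S \<subseteq> S" for c
    using assms(2) by auto
  have "\<exists>T P. 0 < P \<and> lasso_invariant T P (f cq)" if cq: "cq \<in> UNIV \<times> S" for cq
  proof -
    obtain c q where "cq = (c, q)" "q \<in> S"
      using cq by (cases cq) auto
    then have "f cq = (\<lambda>x. ((\<lambda>q. \<delta> q c) ^^ x) q)"
      by (simp add: f_def)
    show ?thesis
      unfolding \<open>f cq = _\<close> by (rule funpow_lasso_invariant[OF assms(1) \<open>q \<in> S\<close> closed[of c]])
  qed
  moreover have "finite ((UNIV :: 'c set) \<times> S)"
    using assms(1) by (intro finite_cartesian_product finite_UNIV)
  ultimately obtain T P where "0 < P" "\<forall>cq\<in>UNIV \<times> S. lasso_invariant T P (f cq)"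
    using lasso_invariant_common[of "UNIV \<times> S" f] by blast
  then show ?thesis
    by (intro exI[of _ T] exI[of _ P]) (auto simp: f_def)
qed

section \<open>Regular unary languages\<close>

lemma regular_langI:
  fixes S :: "'s set" and \<delta> :: "'s \<Rightarrow> 'c \<Rightarrow> 's"
  assumes "finite S" "q0 \<in> S" "\<forall>q\<in>S. \<forall>c. \<delta> q c \<in> S" "F \<subseteq> S"
  shows "regular_lang {w. foldl \<delta> q0 w \<in> F}"
proof -
  obtain f :: "'s \<Rightarrow> nat" and m where f: "f ` S = {i. i < m}" "inj_on f S"
    using finite_imp_inj_to_nat_seg[OF assms(1)] by blast
  define g where "g = the_inv_into S f"
  have gf: "g (f q) = q" if "q \<in> S" for q
    using f(2) that by (simp add: g_def the_inv_into_f_f)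
  define \<delta>' where "\<delta>' q c = f (\<delta> (g q) c)" for q c
  have closed: "foldl \<delta> q w \<in> S" if "q \<in> S" for q w
    using that by (induction w arbitrary: q) (use assms(3) in auto)
  have fold: "foldl \<delta>' (f q) w = f (foldl \<delta> q w)" if "q \<in> S" for q w
    using that by (induction w arbitrary: q) (use assms(3) in \<open>auto simp: \<delta>'_def gf\<close>)
  have "{w. foldl \<delta> q0 w \<in> F} = {w. foldl \<delta>' (f q0) w \<in> f ` F}"
    using fold[OF assms(2)] closed[OF assms(2)] assms(4) f(2) by (auto simp: inj_on_image_mem_iff)
  moreover have "finite (f ` S)" "f q0 \<in> f ` S" "\<forall>q\<in>f ` S. \<forall>c. \<delta>' q c \<in> f ` S" "f ` F \<subseteq> f ` S"
    using assms by (auto simp: \<delta>'_def gf)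
  ultimately show ?thesis
    unfolding regular_lang_def by blast
qed

lemma foldl_replicate: "foldl \<delta> q (replicate k c) = ((\<lambda>q. \<delta> q c) ^^ k) q"
  by (induction k arbitrary: q) (simp_all add: funpow_Suc_right del: funpow.simps)

lemma unary_word_image: "unary_word ` L = {w. length w \<in> L}"
proof -
  have "w = unary_word (length w)" for w
    by (simp add: unary_word_def replicate_length_same)
  then show ?thesis
    by (auto simp: unary_word_def)
qed

lemma foldl_unary: "foldl \<delta> q (w :: unit list) = ((\<lambda>q. \<delta> q ()) ^^ length w) q"
  using foldl_replicate[of \<delta> q "length w" "()"] by (simp add: replicate_length_same)

theorem regular_unary_iff:
  "regular_lang (unary_word ` L) \<longleftrightarrow> (\<exists>T P. 0 < P \<and> lasso_invariant T P (\<lambda>x. x \<in> L))"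
proof
  assume "regular_lang (unary_word ` L)"
  then obtain S :: "nat set" and \<delta> :: "nat \<Rightarrow> unit \<Rightarrow> nat" and q0 F
    where dfa: "finite S" "q0 \<in> S" "\<forall>q\<in>S. \<forall>c. \<delta> q c \<in> S"
      and lang: "unary_word ` L = {w. foldl \<delta> q0 w \<in> F}"
    unfolding regular_lang_def by (elim exE conjE) (rule that; assumption)
  have mem: "x \<in> L \<longleftrightarrow> ((\<lambda>q. \<delta> q ()) ^^ x) q0 \<in> F" for x
    using lang[THEN eqset_imp_iff, of "replicate x ()"] by (simp add: unary_word_image foldl_unary)
  obtain T P where P: "0 < P" and inv: "lasso_invariant T P (\<lambda>x. ((\<lambda>q. \<delta> q ()) ^^ x) q0)"
    using dfa_iterates_lasso_invariant[OF dfa(1,3)] dfa(2) by blast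
  have "x \<in> L \<longleftrightarrow> y \<in> L" if "lasso T P x = lasso T P y" for x y
    using lasso_invariantD[OF inv that] mem by simp
  then show "\<exists>T P. 0 < P \<and> lasso_invariant T P (\<lambda>x. x \<in> L)"
    using P unfolding lasso_invariant_def by blast
next
  assume "\<exists>T P. 0 < P \<and> lasso_invariant T P (\<lambda>x. x \<in> L)"
  then obtain T P where P: "0 < P" and inv: "lasso_invariant T P (\<lambda>x. x \<in> L)"
    by blast
  have "lasso T P x \<in> lasso T P ` L \<longleftrightarrow> x \<in> L" for x
    using lasso_invariantD[OF inv, of x] by blast
  then have "unary_word ` L = {w. foldl (\<lambda>q (_::unit). lasso_step T P q) 0 w \<in> lasso T P ` L}"
    by (simp add: unary_word_image foldl_unary funpow_lasso_step[OF P])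
  also have "regular_lang \<dots>"
  proof (rule regular_langI[of "{..<T + P}"])
    show "\<forall>q\<in>{..<T + P}. \<forall>c. lasso_step T P q \<in> {..<T + P}"
      using P by (simp add: lasso_step_def)
    show "lasso T P ` L \<subseteq> {..<T + P}"
      using lasso_less_bound[OF P] by auto
  qed (use P in auto)
  finally show "regular_lang (unary_word ` L)" .
qed

section \<open>Regular relations between unary words\<close>

lemma conv_0_left: "conv 0 n = replicate n (False, True)"
  by (rule nth_equalityI) (simp_all add: conv_def)

lemma conv_0_right: "conv m 0 = replicate m (True, False)"
  by (rule nth_equalityI) (simp_all add: conv_def)

lemma conv_Suc_Suc: "conv (Suc m) (Suc n) = (True, True) # conv m n"
  by (rule nth_equalityI) (auto simp: conv_def nth_Cons' simp del: upt_Suc)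

lemma conv_eq_replicate:
  "conv m n = replicate (min m n) (True, True) @ replicate (m - n) (True, False) @
     replicate (n - m) (False, True)"
proof (induction m arbitrary: n)
  case (Suc m)
  then show ?case
    by (cases n) (simp_all add: conv_0_right conv_Suc_Suc)
qed (simp add: conv_0_left)

lemma conv_eq_conv_iff: "conv m n = conv m' n' \<longleftrightarrow> m = m' \<and> n = n'"
proof -
  have "length (filter fst (conv m n)) = m" "length (filter snd (conv m n)) = n" for m n
    by (simp_all add: conv_eq_replicate)
  then show ?thesis
    by metis
qed

lemma conv_snoc:
  "conv (Suc m) (Suc m) = conv m m @ [(True, True)]"
  "n \<le> m \<Longrightarrow> conv (Suc m) n = conv m n @ [(True, False)]"
  "m \<le> n \<Longrightarrow> conv m (Suc n) = conv m n @ [(False, True)]"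
  by (simp_all add: conv_def max_def)

text \<open>An infinite automaton reading convolutions: its state counts the letters read in each
  component, and becomes \<open>None\<close> as soon as the input is no longer a prefix of a convolution.\<close>

fun conv_step :: "(nat \<times> nat) option \<Rightarrow> bool \<times> bool \<Rightarrow> (nat \<times> nat) option" where
  "conv_step (Some (m, n)) (x, y) =
     (if x \<and> y \<and> m = n \<or> x \<and> \<not> y \<and> n \<le> m \<or> \<not> x \<and> y \<and> m \<le> n
      then Some (m + of_bool x, n + of_bool y) else None)"
| "conv_step None c = None"

lemma foldl_conv_step_conv: "foldl conv_step (Some (0, 0)) (conv m n) = Some (m, n)"
proof -
  have "foldl conv_step (Some (a, a)) (replicate k (True, True)) = Some (a + k, a + k)" for a k
    by (induction k arbitrary: a) auto
  moreover have "foldl conv_step (Some (a, b)) (replicate k (True, False)) = Some (a + k, b)"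
    if "b \<le> a" for a b k
    using that by (induction k arbitrary: a) auto
  moreover have "foldl conv_step (Some (a, b)) (replicate k (False, True)) = Some (a, b + k)"
    if "a \<le> b" for a b k
    using that by (induction k arbitrary: b) auto
  ultimately show ?thesis
    by (cases "m \<le> n") (simp_all add: conv_eq_replicate)
qed

lemma foldl_conv_step_imp_conv: "foldl conv_step (Some (0, 0)) w = Some (m, n) \<Longrightarrow> w = conv m n"
proof (induction w arbitrary: m n rule: rev_induct)
  case Nil
  then show ?case
    by (simp add: conv_def)
next
  case (snoc c w)
  have "foldl conv_step None w' = None" for w'
    by (induction w') auto
  then obtain m0 n0 where prefix: "foldl conv_step (Some (0, 0)) w = Some (m0, n0)"
    using snoc.prems by (cases "foldl conv_step (Some (0, 0)) w") auto
  then have "w = conv m0 n0"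
    by (rule snoc.IH)
  then show ?case
    using snoc.prems prefix by (cases c) (auto simp: conv_snoc split: if_splits)
qed

lemma foldl_conv_step_iff: "foldl conv_step (Some (0, 0)) w = Some (m, n) \<longleftrightarrow> w = conv m n"
  using foldl_conv_step_conv foldl_conv_step_imp_conv by blast

text \<open>The finite quotient of \<open>conv_step\<close>: which component is ahead, and the lasso positions of
  the common length and of the overhang.\<close>

fun conv_class :: "nat \<Rightarrow> nat \<Rightarrow> nat \<times> nat \<Rightarrow> bool \<times> bool \<times> nat \<times> nat" where
  "conv_class T P (m, n) = (m \<le> n, n \<le> m, lasso T P (min m n), lasso T P (max m n - min m n))"

fun class_step ::
  "nat \<Rightarrow> nat \<Rightarrow> (bool \<times> bool \<times> nat \<times> nat) option \<Rightarrow> bool \<times> bool \<Rightarrow> (bool \<times> bool \<times> nat \<times> nat) option"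
where
  "class_step T P (Some (le, ge, a, d)) (x, y) =
     (if x \<and> y \<and> le \<and> ge then Some (True, True, lasso_step T P a, d)
      else if x \<and> \<not> y \<and> ge then Some (False, True, a, lasso_step T P d)
      else if \<not> x \<and> y \<and> le then Some (True, False, a, lasso_step T P d)
      else None)"
| "class_step T P None c = None"

lemma class_step_conv_step:
  assumes "0 < P"
  shows "class_step T P (map_option (conv_class T P) s) c = map_option (conv_class T P) (conv_step s c)"
proof (cases s)
  case (Some mn)
  then show ?thesis
    using assms by (cases mn; cases c) (auto simp: lasso_Suc Suc_diff_le min_def max_def)
qed simp

lemma foldl_class_step:
  "0 < P \<Longrightarrow> foldl (class_step T P) (map_option (conv_class T P) s) w =
     map_option (conv_class T P) (foldl conv_step s w)"
  by (induction w arbitrary: s) (simp_all add: class_step_conv_step)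

definition conv_lasso_invariant :: "nat \<Rightarrow> nat \<Rightarrow> (nat \<Rightarrow> nat \<Rightarrow> bool) \<Rightarrow> bool" where
  "conv_lasso_invariant T P S \<longleftrightarrow>
     (\<forall>m n m' n'. conv_class T P (m, n) = conv_class T P (m', n') \<longrightarrow> S m n = S m' n')"

lemma conv_class_eq_iff:
  "conv_class T P (m, n) = conv_class T P (m', n') \<longleftrightarrow>
    (m \<le> n \<longleftrightarrow> m' \<le> n') \<and> (n \<le> m \<longleftrightarrow> n' \<le> m') \<and> lasso T P (min m n) = lasso T P (min m' n') \<and>
    lasso T P (max m n - min m n) = lasso T P (max m' n' - min m' n')"
  by simp

lemma conv_class_eq_lasso:
  assumes "conv_class T P (m, n) = conv_class T P (m', n')"
  shows "lasso T P (min m n) = lasso T P (min m' n')" "lasso T P (m - n) = lasso T P (m' - n')"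
    "lasso T P (n - m) = lasso T P (n' - m')"
  using assms by (cases "m \<le> n"; auto simp: max_def min_def)+

lemma conv_lasso_invariantD:
  assumes "conv_lasso_invariant T P S" "conv_class T P (m, n) = conv_class T P (m', n')"
  shows "S m n = S m' n'"
  using assms(1)[unfolded conv_lasso_invariant_def, rule_format, OF assms(2)] .

lemma conv_lasso_invariant_imp_regular:
  assumes P: "0 < P" and inv: "conv_lasso_invariant T P S"
  shows "regular_lang {conv u v | u v. S u v}"
proof -
  let ?Q = "insert None (Some ` (UNIV \<times> UNIV \<times> {..<T + P} \<times> {..<T + P}))"
  let ?F = "Some ` conv_class T P ` {(m, n). S m n}"
  let ?q0 = "Some (conv_class T P (0, 0))"
  have run: "foldl (class_step T P) ?q0 w = map_option (conv_class T P) (foldl conv_step (Some (0, 0)) w)"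
    for w
    using foldl_class_step[OF P, where s = "Some (0, 0)"] by simp
  have "{conv u v | u v. S u v} = {w. foldl (class_step T P) ?q0 w \<in> ?F}"
  proof (intro set_eqI iffI)
    fix w
    assume "w \<in> {w. foldl (class_step T P) ?q0 w \<in> ?F}"
    then obtain m n where "S m n" and "map_option (conv_class T P) (foldl conv_step (Some (0, 0)) w) =
        Some (conv_class T P (m, n))"
      unfolding run by auto
    then obtain m' n' where "foldl conv_step (Some (0, 0)) w = Some (m', n')"
      and "conv_class T P (m', n') = conv_class T P (m, n)"
      by auto
    then show "w \<in> {conv u v | u v. S u v}"
      using inv \<open>S m n\<close> unfolding conv_lasso_invariant_def foldl_conv_step_iff by blast
  next
    fix w
    assume "w \<in> {conv u v | u v. S u v}"
    then obtain u v where "w = conv u v" "S u v"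
      by blast
    then show "w \<in> {w. foldl (class_step T P) ?q0 w \<in> ?F}"
      unfolding run by (force simp: foldl_conv_step_conv simp del: conv_class.simps)
  qed
  moreover have "regular_lang {w. foldl (class_step T P) ?q0 w \<in> ?F}"
  proof (rule regular_langI[of ?Q])
    have "lasso_step T P a < T + P" for a
      using P by (simp add: lasso_step_def)
    then show "\<forall>q\<in>?Q. \<forall>c. class_step T P q c \<in> ?Q"
      by (auto elim!: class_step.elims)
    show "?F \<subseteq> ?Q"
      using lasso_less_bound[OF P] by auto
  qed (use P in auto)
  ultimately show ?thesis
    by simp
qed

lemma regular_imp_conv_lasso_invariant:
  assumes "regular_lang {conv u v | u v. S u v}"
  shows "\<exists>T P. 0 < P \<and> conv_lasso_invariant T P S"
proof -
  obtain Q :: "nat set" and \<delta> :: "nat \<Rightarrow> bool \<times> bool \<Rightarrow> nat" and q0 F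
    where dfa: "finite Q" "q0 \<in> Q" "\<forall>q\<in>Q. \<forall>c. \<delta> q c \<in> Q"
      and lang: "{conv u v | u v. S u v} = {w. foldl \<delta> q0 w \<in> F}"
    using assms unfolding regular_lang_def by (elim exE conjE) (rule that; assumption)
  define it where "it c k q = ((\<lambda>q. \<delta> q c) ^^ k) q" for c k q
  have "\<delta> q c \<in> Q" if "q \<in> Q" for q c
    using dfa(3) that by blast
  then have it_closed: "it c k q \<in> Q" if "q \<in> Q" for c k q
    unfolding it_def using that by (induction k) simp_all
  have accept: "S m n \<longleftrightarrow>
      it (False, True) (n - m) (it (True, False) (m - n) (it (True, True) (min m n) q0)) \<in> F" for m n
  proof -
    have "S m n \<longleftrightarrow> conv m n \<in> {conv u v | u v. S u v}"
      by (auto simp: conv_eq_conv_iff)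
    then show ?thesis
      unfolding lang by (simp add: conv_eq_replicate foldl_replicate it_def)
  qed
  obtain T P where P: "0 < P" and per: "\<forall>c. \<forall>q\<in>Q. lasso_invariant T P (\<lambda>k. it c k q)"
    using dfa_iterates_lasso_invariant[OF dfa(1,3)] unfolding it_def by blast
  have it_eq: "it c k q = it c k' q" if "q \<in> Q" "lasso T P k = lasso T P k'" for c k k' q
    using per that lasso_invariantD by fast
  have "S m n = S m' n'" if "conv_class T P (m, n) = conv_class T P (m', n')" for m n m' n'
    unfolding accept
    using it_eq[OF dfa(2) conv_class_eq_lasso(1)[OF that]]
      it_eq[OF it_closed[OF dfa(2)] conv_class_eq_lasso(2)[OF that]]
      it_eq[OF it_closed[OF it_closed[OF dfa(2)]] conv_class_eq_lasso(3)[OF that]]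
    by simp
  then show ?thesis
    using P unfolding conv_lasso_invariant_def by blast
qed

theorem regular_conv_iff:
  "regular_lang {conv u v | u v. S u v} \<longleftrightarrow> (\<exists>T P. 0 < P \<and> conv_lasso_invariant T P S)"
  using regular_imp_conv_lasso_invariant conv_lasso_invariant_imp_regular by blast

lemma conv_lasso_invariant_refine:
  assumes "conv_lasso_invariant T P S" "0 < P" "0 < P'" "T \<le> T'" "P dvd P'"
  shows "conv_lasso_invariant T' P' S"
  unfolding conv_lasso_invariant_def
proof (intro allI impI)
  fix m n m' n'
  assume "conv_class T' P' (m, n) = conv_class T' P' (m', n')"
  then have "conv_class T P (m, n) = conv_class T P (m', n')"
    unfolding conv_class_eq_iff using lasso_refine[OF assms(2-5)] by blast
  then show "S m n = S m' n'"
    by (rule conv_lasso_invariantD[OF assms(1)])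
qed

lemma conv_lasso_invariant_ordered:
  assumes inv: "conv_lasso_invariant T P S" and T: "0 < T" and le: "u \<le> v" "u' \<le> v'"
    and eq: "lasso T P u = lasso T P u'" "lasso T P (v - u) = lasso T P (v' - u')"
  shows "S u v = S u' v'" "S v u = S v' u'"
proof -
  have cls: "conv_class T P (a, b) = (True, b \<le> a, lasso T P a, lasso T P (b - a))"
    "conv_class T P (b, a) = (b \<le> a, True, lasso T P a, lasso T P (b - a))" if "a \<le> b" for a b
    using that by (simp_all add: min_def max_def)
  have "v \<le> u \<longleftrightarrow> lasso T P (v - u) = 0" "v' \<le> u' \<longleftrightarrow> lasso T P (v' - u') = 0"
    using lasso_eq_0_iff[OF T] by simp_all
  then have "(v \<le> u) = (v' \<le> u')"
    using eq(2) by simp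
  then have "conv_class T P (u, v) = conv_class T P (u', v')" "conv_class T P (v, u) = conv_class T P (v', u')"
    unfolding cls[OF le(1)] cls[OF le(2)] eq by simp_all
  then show "S u v = S u' v'" "S v u = S v' u'"
    using conv_lasso_invariantD[OF inv] by blast+
qed

lemma conv_lasso_invariant_orderedI:
  assumes ordered: "\<And>u v u' v'. u \<le> v \<Longrightarrow> u' \<le> v' \<Longrightarrow> lasso T P u = lasso T P u' \<Longrightarrow>
      lasso T P (v - u) = lasso T P (v' - u') \<Longrightarrow> S u v = S u' v' \<and> S v u = S v' u'"
  shows "conv_lasso_invariant T P S"
  unfolding conv_lasso_invariant_def
proof (intro allI impI)
  fix m n m' n'
  assume "conv_class T P (m, n) = conv_class T P (m', n')"
  then have cmp: "m \<le> n \<longleftrightarrow> m' \<le> n'" "n \<le> m \<longleftrightarrow> n' \<le> m'"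
    and eq: "lasso T P (min m n) = lasso T P (min m' n')"
      "lasso T P (max m n - min m n) = lasso T P (max m' n' - min m' n')"
    unfolding conv_class_eq_iff by blast+
  show "S m n = S m' n'"
  proof (cases "m \<le> n")
    case True
    with cmp(1) have "m' \<le> n'"
      by blast
    with True have "lasso T P m = lasso T P m'" "lasso T P (n - m) = lasso T P (n' - m')"
      using eq by (simp_all add: min_absorb1 max_absorb2)
    then show ?thesis
      using ordered[OF \<open>m \<le> n\<close> \<open>m' \<le> n'\<close>] by blast
  next
    case False
    with cmp have "n \<le> m" "n' \<le> m'"
      by auto
    then have "lasso T P n = lasso T P n'" "lasso T P (m - n) = lasso T P (m' - n')"
      using eq by (simp_all add: min_absorb2 max_absorb1)
    then show ?thesis
      using ordered[OF \<open>n \<le> m\<close> \<open>n' \<le> m'\<close>] by blast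
  qed
qed

lemma conv_lasso_invariant_swap:
  assumes "conv_lasso_invariant T P S"
  shows "conv_lasso_invariant T P (\<lambda>u v. S v u)"
  unfolding conv_lasso_invariant_def
proof (intro allI impI)
  fix m n m' n'
  assume "conv_class T P (m, n) = conv_class T P (m', n')"
  then have "conv_class T P (n, m) = conv_class T P (n', m')"
    unfolding conv_class_eq_iff min.commute[of n m] max.commute[of n m] min.commute[of n' m']
      max.commute[of n' m'] by blast
  then show "S n m = S n' m'"
    by (rule conv_lasso_invariantD[OF assms])
qed

lemma conv_lasso_invariant_shift:
  assumes "conv_lasso_invariant T P S" "0 < T" "T \<le> x" "T \<le> y"
  shows "S (x + P * c) (y + P * c) = S x y"
proof -
  have shift: "lasso T P (z + P * c) = lasso T P z" if "T \<le> z" for z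
    using that by (intro lasso_eqI) auto
  show ?thesis
  proof (cases "x \<le> y")
    case True
    then show ?thesis
      using conv_lasso_invariant_ordered(1)[OF assms(1,2), of "x + P * c" "y + P * c" x y] shift assms(3)
      by simp
  next
    case False
    then show ?thesis
      using conv_lasso_invariant_ordered(2)[OF assms(1,2), of "y + P * c" "x + P * c" y x] shift assms(4)
      by simp
  qed
qed

lemma conv_lasso_invariant_stretch:
  assumes "conv_lasso_invariant T P S" "0 < T" "x \<le> y" "T \<le> y - x"
  shows "S x (y + P * c) = S x y" "S (y + P * c) x = S y x"
proof -
  have "y + P * c - x = (y - x) + P * c"
    using assms(3) by simp
  also have "lasso T P \<dots> = lasso T P (y - x)"
    using assms(4) by (intro lasso_eqI) simp_all
  finally have "lasso T P (y + P * c - x) = lasso T P (y - x)" .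
  then show "S x (y + P * c) = S x y" "S (y + P * c) x = S y x"
    using conv_lasso_invariant_ordered[OF assms(1,2), of x "y + P * c" x y] assms(3) by simp_all
qed

lemma conv_lasso_invariant_offset:
  assumes S: "conv_lasso_invariant T P S" and T: "0 < T" "T \<le> P"
    and xy: "T \<le> x" "T \<le> y" "x < y + P"
  shows "S (x + P * a) (y + P * (a + e)) =
    (if e = 0 then S x y else if e = 1 then S x (y + P) else S x (y + 2 * P))"
proof -
  have shifted: "S (x + P * a) (y + P * (a + e)) = S x (y + P * e)"
    using conv_lasso_invariant_shift[OF S T(1) xy(1), of "y + P * e" a] xy(2)
    by (simp add: algebra_simps)
  show ?thesis
  proof (cases "e \<le> 1")
    case True
    then show ?thesis
      using shifted by (auto simp: le_Suc_eq)
  next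
    case False
    define e' where "e' = e - 2"
    have e: "e = e' + 2"
      using False by (simp add: e'_def)
    have "S x (y + 2 * P + P * e') = S x (y + 2 * P)"
      using conv_lasso_invariant_stretch(1)[OF S T(1), of x "y + 2 * P" e'] T(2) xy(3) by simp
    moreover have "y + P * e = y + 2 * P + P * e'"
      by (simp add: e algebra_simps)
    ultimately have "S (x + P * a) (y + P * (a + e)) = S x (y + 2 * P)"
      using shifted by (simp only:)
    then show ?thesis
      using False by simp
  qed
qed

lemma conv_lasso_invariant_restrict:
  assumes P: "0 < P" and L: "lasso_invariant T P (\<lambda>x. x \<in> L)"
    and S: "\<And>u v u' v'. u \<in> L \<Longrightarrow> v \<in> L \<Longrightarrow> u' \<in> L \<Longrightarrow> v' \<in> L \<Longrightarrow> u \<le> v \<Longrightarrow> u' \<le> v' \<Longrightarrow>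
      lasso T P u = lasso T P u' \<Longrightarrow> lasso T P (v - u) = lasso T P (v' - u') \<Longrightarrow>
      S u v = S u' v' \<and> S v u = S v' u'"
  shows "conv_lasso_invariant T P (\<lambda>u v. u \<in> L \<and> v \<in> L \<and> S u v)"
proof (rule conv_lasso_invariant_orderedI)
  fix u v u' v'
  assume le: "u \<le> v" "u' \<le> v'" and eq: "lasso T P u = lasso T P u'" "lasso T P (v - u) = lasso T P (v' - u')"
  have "lasso T P (u + (v - u)) = lasso T P (u' + (v' - u'))"
    using lasso_add[OF P eq] .
  then have "lasso T P v = lasso T P v'"
    using le by simp
  then have "u \<in> L \<longleftrightarrow> u' \<in> L" "v \<in> L \<longleftrightarrow> v' \<in> L"
    using lasso_invariantD[OF L eq(1)] lasso_invariantD[OF L] by blast+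
  then show "(u \<in> L \<and> v \<in> L \<and> S u v) = (u' \<in> L \<and> v' \<in> L \<and> S u' v') \<and>
      (v \<in> L \<and> u \<in> L \<and> S v u) = (v' \<in> L \<and> u' \<in> L \<and> S v' u')"
    using S[OF _ _ _ _ le eq] by blast
qed

lemma conv_lasso_invariant_diag:
  assumes "0 < T" "0 < P" "lasso_invariant T P (\<lambda>x. x \<in> L)"
  shows "conv_lasso_invariant T P (\<lambda>u v. u \<in> L \<and> v \<in> L \<and> u = v)"
proof (rule conv_lasso_invariant_restrict[OF assms(2,3)])
  fix u v u' v'
  assume le: "u \<le> v" "u' \<le> v'" and "lasso T P (v - u) = lasso T P (v' - u')"
  then have "v - u = 0 \<longleftrightarrow> v' - u' = 0"
    using lasso_eq_0_iff[OF assms(1)] by metis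
  then show "(u = v) = (u' = v') \<and> (v = u) = (v' = u')"
    using le by auto
qed

section \<open>Relations that are their own propagation\<close>

definition propagation_stable :: "nat set \<Rightarrow> nat \<Rightarrow> (elt \<Rightarrow> elt \<Rightarrow> bool) \<Rightarrow> bool" where
  "propagation_stable Q' n \<rho> \<longleftrightarrow>
     (\<forall>a\<in>prop_carrier Q' n. \<forall>b\<in>prop_carrier Q' n. prop_rel \<rho> a b = \<rho> a b)"

lemma seed_in_prop_carrier [simp]: "seed k i \<in> prop_carrier Q' n \<longleftrightarrow> k < n \<and> 1 \<le> i"
  by (auto simp: prop_carrier_def)

lemma Inl_in_prop_carrier [simp]: "Inl q \<in> prop_carrier Q' n \<longleftrightarrow> q \<in> Q'"
  by (auto simp: prop_carrier_def)

lemma prop_carrier_cases: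
  assumes "a \<in> prop_carrier Q' n"
  obtains q where "a = Inl q" "q \<in> Q'" | k i where "a = seed k i" "k < n" "1 \<le> i"
  using assms by (auto simp: prop_carrier_def)

lemma propagation_stableD:
  "propagation_stable Q' n \<rho> \<Longrightarrow> a \<in> prop_carrier Q' n \<Longrightarrow> b \<in> prop_carrier Q' n \<Longrightarrow>
   prop_rel \<rho> a b = \<rho> a b"
  unfolding propagation_stable_def by blast

lemma propagation_stable_seed:
  assumes "propagation_stable Q' n \<rho>" "k < n" "l < n" "1 \<le> i" "1 \<le> j"
  shows "\<rho> (seed k i) (seed l j) =
    (if j = i then \<rho> (seed k 1) (seed l 1)
     else if j = i + 1 then \<rho> (seed k 1) (seed l 2)
     else if j + 1 = i then \<rho> (seed k 2) (seed l 1)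
     else if i + 2 \<le> j then \<rho> (seed k 1) (seed l 3) else \<rho> (seed k 3) (seed l 1))"
proof -
  have stable: "prop_rel \<rho> (seed k i) (seed l j) = \<rho> (seed k i) (seed l j)"
    using assms by (intro propagation_stableD) simp_all
  show ?thesis
    by (simp only: prop_rel.simps flip: stable) auto
qed

lemma propagation_stable_Inl:
  assumes "propagation_stable Q' n \<rho>" "q \<in> Q'" "k < n" "2 \<le> i"
  shows "\<rho> (Inl q) (seed k i) = \<rho> (Inl q) (seed k 2)" "\<rho> (seed k i) (Inl q) = \<rho> (seed k 2) (Inl q)"
  using propagation_stableD[OF assms(1), of "Inl q" "seed k i"]
    propagation_stableD[OF assms(1), of "seed k i" "Inl q"] assms(2-4) by simp_all

lemma prop_rel_seed_offset:
  "prop_rel \<rho> (seed k i) (seed l (i + e)) = (if e = 0 then \<rho> (seed k 1) (seed l 1)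
     else if e = 1 then \<rho> (seed k 1) (seed l 2) else \<rho> (seed k 1) (seed l 3))"
  "prop_rel \<rho> (seed l (i + e)) (seed k i) = (if e = 0 then \<rho> (seed l 1) (seed k 1)
     else if e = 1 then \<rho> (seed l 2) (seed k 1) else \<rho> (seed l 3) (seed k 1))"
  by auto

lemma propagation_stable_FA_foundational:
  assumes "finite Q'" "propagation_stable Q' n \<rho>"
  shows "FA_foundational Q' n \<rho>"
proof -
  note seed = propagation_stable_seed[OF assms(2)]
  note Inl = propagation_stable_Inl[OF assms(2)]
  have diag: "\<rho> (seed k i) (seed l i) = \<rho> (seed k j) (seed l j)"
    if "k < n" "l < n" "i \<in> {1..5}" "j \<in> {1..5}" for k l i j
    using seed[of k l i i] seed[of k l j j] that by simp
  have up: "\<rho> (seed k i) (seed l (i + 1)) = \<rho> (seed k j) (seed l (j + 1))"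
    if "k < n" "l < n" "i \<in> {1..4}" "j \<in> {1..4}" for k l i j
    using seed[of k l i "i + 1"] seed[of k l j "j + 1"] that by simp
  have down: "\<rho> (seed k (i + 1)) (seed l i) = \<rho> (seed k (j + 1)) (seed l j)"
    if "k < n" "l < n" "i \<in> {1..4}" "j \<in> {1..4}" for k l i j
    using seed[of k l "i + 1" i] seed[of k l "j + 1" j] that by simp
  have far: "\<rho> (seed k i) (seed l j) = \<rho> (seed k i') (seed l j')"
    "\<rho> (seed k j) (seed l i) = \<rho> (seed k j') (seed l i')"
    if "k < n" "l < n" "i \<in> {1..5}" "j \<in> {1..5}" "i' \<in> {1..5}" "j' \<in> {1..5}"
      "i + 2 \<le> j" "i' + 2 \<le> j'" for k l i j i' j'
    using seed[of k l i j] seed[of k l i' j'] seed[of k l j i] seed[of k l j' i'] that by simp_all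
  have Inl_seed: "\<rho> (Inl q) (seed k i) = \<rho> (Inl q) (seed k j)"
    "\<rho> (seed k i) (Inl q) = \<rho> (seed k j) (Inl q)"
    if "k < n" "q \<in> Q'" "i \<in> {2..5}" "j \<in> {2..5}" for k q i j
    using Inl[OF that(2,1), of i] Inl[OF that(2,1), of j] that by simp_all
  show ?thesis
    unfolding FA_foundational_def
  proof (intro conjI allI impI ballI assms(1))
  qed (rule diag up down far Inl_seed; assumption)+
qed

text \<open>The two equations exclude propagated quasi-orders such as
  \<open>p\<^sub>i \<le> p\<^sub>j \<longleftrightarrow> j = i \<or> i + 2 \<le> j\<close>, which are transitive but have none of the four shapes.\<close>

lemma propagation_stable_seed_shape:
  assumes "propagation_stable Q' n \<rho>" "k < n" "\<rho> (seed k 1) (seed k 1)"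
    "\<rho> (seed k 1) (seed k 2) = \<rho> (seed k 1) (seed k 3)"
    "\<rho> (seed k 2) (seed k 1) = \<rho> (seed k 3) (seed k 1)"
  shows "seed_antichain \<rho> k \<or> seed_ascending \<rho> k \<or> seed_descending \<rho> k \<or> seed_scc \<rho> k"
proof -
  define up where "up = \<rho> (seed k 1) (seed k 2)"
  define down where "down = \<rho> (seed k 2) (seed k 1)"
  have seed: "\<rho> (seed k i) (seed k j) = (if i = j then True else if i < j then up else down)"
    if "1 \<le> i" "1 \<le> j" for i j
    using propagation_stable_seed[OF assms(1,2,2) that] assms(3-5) unfolding up_def down_def by auto
  consider "up" "down" | "up" "\<not> down" | "\<not> up" "down" | "\<not> up" "\<not> down"
    by blast
  then show ?thesis
  proof cases
    case 1
    then show ?thesis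
      unfolding seed_scc_def using seed by auto
  next
    case 2
    then show ?thesis
      unfolding seed_ascending_def strictly_def using seed by auto
  next
    case 3
    then show ?thesis
      unfolding seed_descending_def strictly_def using seed by auto
  next
    case 4
    then show ?thesis
      unfolding seed_antichain_def using seed by auto
  qed
qed

section \<open>From a presentation to a propagation\<close>

lemma lasso_diff_witness:
  assumes P: "0 < P" and u: "2 * T + P \<le> u" "2 * T + P \<le> u'" "u mod P = u' mod P" and "v < u"
  shows "\<exists>v'<u'. lasso T P v = lasso T P v' \<and> lasso T P (u - v) = lasso T P (u' - v')"
proof (cases "T \<le> u - v")
  case True
  define v' where "v' = lasso T P v"
  have "v' < T + P"
    using lasso_less_bound[OF P] by (simp add: v'_def)
  moreover have "(u - v) mod P = (u' - v') mod P"
    using cong_diff_nat[of u u' P v v'] u(3) \<open>v < u\<close> \<open>v' < T + P\<close> u(2)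
    by (simp add: cong_def v'_def lasso_mod[OF P])
  ultimately have "lasso T P (u - v) = lasso T P (u' - v')"
    using True u(2) by (intro lasso_eqI) simp_all
  moreover have "lasso T P v = lasso T P v'"
    using lasso_lasso[OF P] by (simp add: v'_def)
  ultimately show ?thesis
    using \<open>v' < T + P\<close> u(2) by (intro exI[of _ v']) simp
next
  case False
  define v' where "v' = u' - (u - v)"
  have "(u - (u - v)) mod P = (u' - (u - v)) mod P"
    using cong_diff_nat[of u u' P "u - v" "u - v"] u(3) False u(2) by (simp add: cong_def)
  then have "lasso T P v = lasso T P v'"
    using False u \<open>v < u\<close> by (intro lasso_eqI) (simp_all add: v'_def)
  moreover have "u' - v' = u - v" "v' < u'"
    using False u(2) \<open>v < u\<close> by (simp_all add: v'_def)
  ultimately show ?thesis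
    by auto
qed

definition least_reps :: "nat set \<Rightarrow> (nat \<Rightarrow> 'a) \<Rightarrow> nat set" where
  "least_reps L \<phi> = {u \<in> L. \<forall>v<u. v \<in> L \<longrightarrow> \<phi> v \<noteq> \<phi> u}"

lemma bij_betw_least_reps: "bij_betw \<phi> (least_reps L \<phi>) (\<phi> ` L)"
proof -
  have "inj_on \<phi> (least_reps L \<phi>)"
  proof (rule inj_onI)
    fix u v
    assume "u \<in> least_reps L \<phi>" "v \<in> least_reps L \<phi>" "\<phi> u = \<phi> v"
    then show "u = v"
      unfolding least_reps_def by (metis (mono_tags, lifting) linorder_neqE_nat mem_Collect_eq)
  qed
  moreover have "\<phi> ` L \<subseteq> \<phi> ` least_reps L \<phi>"
  proof
    fix x
    assume "x \<in> \<phi> ` L"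
    then have ex: "\<exists>u. u \<in> L \<and> \<phi> u = x"
      by blast
    define u where "u = (LEAST u. u \<in> L \<and> \<phi> u = x)"
    have u: "u \<in> L \<and> \<phi> u = x"
      unfolding u_def by (rule LeastI_ex[OF ex])
    moreover have "\<not> (v \<in> L \<and> \<phi> v = x)" if "v < u" for v
      using not_less_Least[OF that[unfolded u_def]] .
    ultimately have "u \<in> least_reps L \<phi>"
      unfolding least_reps_def by auto
    then show "x \<in> \<phi> ` least_reps L \<phi>"
      using u by blast
  qed
  moreover have "least_reps L \<phi> \<subseteq> L"
    by (auto simp: least_reps_def)
  ultimately show ?thesis
    unfolding bij_betw_def by blast
qed

definition periodic_above :: "nat \<Rightarrow> nat \<Rightarrow> nat set \<Rightarrow> bool" where
  "periodic_above N P A \<longleftrightarrow> (\<forall>u\<in>A. \<forall>u'. N \<le> u \<longrightarrow> N \<le> u' \<longrightarrow> u mod P = u' mod P \<longrightarrow> u' \<in> A)"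

lemma periodic_aboveD:
  "periodic_above N P A \<Longrightarrow> u \<in> A \<Longrightarrow> N \<le> u \<Longrightarrow> N \<le> u' \<Longrightarrow> u mod P = u' mod P \<Longrightarrow> u' \<in> A"
  unfolding periodic_above_def by blast

lemma least_reps_periodic:
  assumes P: "0 < P" and T: "0 < T" and L: "lasso_invariant T P (\<lambda>x. x \<in> L)"
    and Eq: "conv_lasso_invariant T P (\<lambda>u v. u \<in> L \<and> v \<in> L \<and> \<phi> u = \<phi> v)"
  shows "periodic_above (2 * T + P) P (least_reps L \<phi>)"
  unfolding periodic_above_def
proof (intro ballI allI impI)
  fix u u'
  assume u: "u \<in> least_reps L \<phi>" and le: "2 * T + P \<le> u" "2 * T + P \<le> u'"
    and mod: "u mod P = u' mod P"
  have "lasso T P u = lasso T P u'"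
    using le mod by (intro lasso_eqI) simp_all
  from lasso_invariantD[OF L this] have "u' \<in> L"
    using u by (simp add: least_reps_def)
  moreover have "\<phi> v' \<noteq> \<phi> u'" if "v' < u'" "v' \<in> L" for v'
  proof
    assume "\<phi> v' = \<phi> u'"
    obtain v where v: "v < u" "lasso T P v' = lasso T P v" "lasso T P (u' - v') = lasso T P (u - v)"
      using lasso_diff_witness[OF P le(2,1) mod[symmetric] \<open>v' < u'\<close>] by blast
    have "(v' \<in> L \<and> u' \<in> L \<and> \<phi> v' = \<phi> u') = (v \<in> L \<and> u \<in> L \<and> \<phi> v = \<phi> u)"
      using conv_lasso_invariant_ordered(1)[OF Eq T _ _ v(2,3)] \<open>v' < u'\<close> \<open>v < u\<close> by simp
    then have "v \<in> L" "\<phi> v = \<phi> u"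
      using \<open>v' \<in> L\<close> \<open>u' \<in> L\<close> \<open>\<phi> v' = \<phi> u'\<close> by simp_all
    then show False
      using u \<open>v < u\<close> unfolding least_reps_def by blast
  qed
  ultimately show "u' \<in> least_reps L \<phi>"
    unfolding least_reps_def by blast
qed

text \<open>The \<open>i\<close>-th element of seed \<open>k\<close> is placed at \<open>N + r k + P (i - 1)\<close>, so that every seed runs
  through one residue class modulo \<open>P\<close> above \<open>N\<close>.\<close>

definition seed_code :: "nat \<Rightarrow> nat \<Rightarrow> (nat \<Rightarrow> nat) \<Rightarrow> elt \<Rightarrow> nat" where
  "seed_code N P r a = (case a of Inl q \<Rightarrow> q | Inr (k, i) \<Rightarrow> N + r k + P * (i - 1))"

lemma seed_code_simps [simp]:
  "seed_code N P r (Inl q) = q" "seed_code N P r (Inr (k, i)) = N + r k + P * (i - 1)"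
  by (simp_all add: seed_code_def)

lemma inj_on_seed_code:
  assumes "0 < P" "inj_on r {..<n}" "\<forall>k<n. r k < P" "\<forall>q\<in>Q'. q < N"
  shows "inj_on (seed_code N P r) (prop_carrier Q' n)"
proof (rule inj_onI)
  fix a b
  assume a: "a \<in> prop_carrier Q' n" and b: "b \<in> prop_carrier Q' n"
    and eq: "seed_code N P r a = seed_code N P r b"
  show "a = b"
  proof (cases rule: prop_carrier_cases[OF a]; cases rule: prop_carrier_cases[OF b])
    fix k i l j
    assume ki: "a = seed k i" "k < n" "1 \<le> i" and lj: "b = seed l j" "l < n" "1 \<le> j"
    have sum: "r k + P * (i - 1) = r l + P * (j - 1)"
      using eq ki lj by simp
    have "r k = (r k + P * (i - 1)) mod P" "r l = (r l + P * (j - 1)) mod P"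
      using assms(3) ki(2) lj(2) by simp_all
    then have "r k = r l"
      unfolding sum by simp
    then have "k = l"
      using assms(2) ki(2) lj(2) by (simp add: inj_on_def)
    moreover have "i = j"
      using sum \<open>r k = r l\<close> assms(1) ki(3) lj(3) by simp
    ultimately show "a = b"
      using ki lj by simp
  qed (use eq assms(4) in auto)
qed

lemma seed_code_image:
  assumes P: "0 < P" and periodic: "periodic_above N P A"
    and r: "r ` {..<n} = {s. s < P \<and> N + s \<in> A}"
  shows "seed_code N P r ` prop_carrier {u \<in> A. u < N} n = A"
proof
  show "seed_code N P r ` prop_carrier {u \<in> A. u < N} n \<subseteq> A"
  proof
    fix x
    assume "x \<in> seed_code N P r ` prop_carrier {u \<in> A. u < N} n"
    then obtain a where a: "a \<in> prop_carrier {u \<in> A. u < N} n" and x: "x = seed_code N P r a"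
      by blast
    from a show "x \<in> A"
    proof (cases rule: prop_carrier_cases)
      case (2 k i)
      then have "N + r k \<in> A"
        using r by blast
      then show ?thesis
        using periodic_aboveD[OF periodic, of "N + r k" x] 2 x by simp
    qed (use x in auto)
  qed
  show "A \<subseteq> seed_code N P r ` prop_carrier {u \<in> A. u < N} n"
  proof
    fix u
    assume u: "u \<in> A"
    show "u \<in> seed_code N P r ` prop_carrier {u \<in> A. u < N} n"
    proof (cases "u < N")
      case True
      then show ?thesis
        using u by (intro image_eqI[where x = "Inl u"]) simp_all
    next
      case False
      define s t where "s = (u - N) mod P" and "t = (u - N) div P"
      have u_eq: "u = N + s + P * t"
        using False by (simp add: s_def t_def)
      then have "N + s \<in> A"
        using periodic_aboveD[OF periodic u] False by simp
      then have "s \<in> r ` {..<n}"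
        using r P by (simp add: s_def)
      then obtain k where "k < n" "r k = s"
        by auto
      then show ?thesis
        using u_eq by (intro image_eqI[where x = "seed k (t + 1)"]) simp_all
    qed
  qed
qed

lemma periodic_set_seed_code:
  assumes P: "0 < P" and periodic: "periodic_above N P A"
  obtains n r where "\<forall>k<n. r k < P" "bij_betw (seed_code N P r) (prop_carrier {u \<in> A. u < N} n) A"
proof -
  define Res where "Res = {s. s < P \<and> N + s \<in> A}"
  have "finite Res"
    by (rule finite_subset[of _ "{..<P}"]) (auto simp: Res_def)
  then obtain r where r: "bij_betw r {..<card Res} Res"
    using ex_bij_betw_nat_finite[of Res] by (auto simp: atLeast0LessThan)
  then have "\<forall>k<card Res. r k < P"
    by (auto simp: bij_betw_def Res_def)
  moreover have "bij_betw (seed_code N P r) (prop_carrier {u \<in> A. u < N} (card Res)) A"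
    unfolding bij_betw_def
  proof
    show "inj_on (seed_code N P r) (prop_carrier {u \<in> A. u < N} (card Res))"
      using r calculation by (intro inj_on_seed_code[OF P]) (auto simp: bij_betw_def)
    show "seed_code N P r ` prop_carrier {u \<in> A. u < N} (card Res) = A"
      using r by (intro seed_code_image[OF P periodic]) (auto simp: bij_betw_def Res_def)
  qed
  ultimately show thesis
    using that by blast
qed

lemma seed_code_propagation_stable:
  assumes S: "conv_lasso_invariant T P S" and T: "0 < T" "T \<le> N" "T \<le> P"
    and r: "\<forall>k<n. r k < P" and Q': "\<forall>q\<in>Q'. q < N"
  shows "propagation_stable Q' n (\<lambda>a b. S (seed_code N P r a) (seed_code N P r b))"
  unfolding propagation_stable_def
proof (intro ballI)
  let ?\<rho> = "\<lambda>a b. S (seed_code N P r a) (seed_code N P r b)"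
  have offset: "S (N + r k + P * (i - 1)) (N + r l + P * (i + e - 1)) =
      (if e = 0 then S (N + r k) (N + r l) else if e = 1 then S (N + r k) (N + r l + P)
       else S (N + r k) (N + r l + 2 * P))"
    if "conv_lasso_invariant T P S" "k < n" "l < n" "1 \<le> i" for S k l i e
    using conv_lasso_invariant_offset[OF that(1) T(1,3), of "N + r k" "N + r l" "i - 1" e] r that T(2)
    by (simp add: trans_less_add2)
  have Inl_seed: "S q (N + r k + P * (i - 1)) = S q (N + r k + P)"
    "S (N + r k + P * (i - 1)) q = S (N + r k + P) q"
    if "q \<in> Q'" "k < n" "2 \<le> i" for q k i
  proof -
    have "i - 1 = Suc (i - 2)"
      using that(3) by simp
    then have eq: "N + r k + P * (i - 1) = N + r k + P + P * (i - 2)"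
      by simp
    have le: "q \<le> N + r k + P" "T \<le> N + r k + P - q"
      using Q' that(1) T(3) by fastforce+
    show "S q (N + r k + P * (i - 1)) = S q (N + r k + P)"
      "S (N + r k + P * (i - 1)) q = S (N + r k + P) q"
      unfolding eq by (rule conv_lasso_invariant_stretch[OF S T(1) le])+
  qed
  fix a b
  assume a: "a \<in> prop_carrier Q' n" and b: "b \<in> prop_carrier Q' n"
  show "prop_rel ?\<rho> a b = ?\<rho> a b"
  proof (cases rule: prop_carrier_cases[OF a]; cases rule: prop_carrier_cases[OF b])
    fix k i l j
    assume ki: "a = seed k i" "k < n" "1 \<le> i" and lj: "b = seed l j" "l < n" "1 \<le> j"
    consider e where "j = i + e" | e where "i = j + e"
      by (metis le_add_diff_inverse nat_le_linear)
    then show ?thesis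
    proof cases
      case 1
      then show ?thesis
        using offset[OF S ki(2) lj(2) ki(3), of e] ki(1) lj(1)
        by (simp add: prop_rel_seed_offset mult_2 mult_2_right)
    next
      case 2
      then show ?thesis
        using offset[OF conv_lasso_invariant_swap[OF S] lj(2) ki(2) lj(3), of e] ki(1) lj(1)
        by (simp add: prop_rel_seed_offset mult_2 mult_2_right)
    qed
  next
    fix q l j
    assume "a = Inl q" "q \<in> Q'" and lj: "b = seed l j" "l < n" "1 \<le> j"
    then show ?thesis
      using Inl_seed(1)[of q l j] by auto
  next
    fix k i q
    assume ki: "a = seed k i" "k < n" "1 \<le> i" and "b = Inl q" "q \<in> Q'"
    then show ?thesis
      using Inl_seed(2)[of q k i] by auto
  qed simp
qed

lemma quasi_order_on_pullback:
  assumes "quasi_order_on X R" "F ` C \<subseteq> X" "\<forall>a\<in>C. \<forall>b\<in>C. S a b = R (F a) (F b)"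
  shows "quasi_order_on C S"
  using assms unfolding quasi_order_on_def image_subset_iff by metis

lemma isomorphic_pullback:
  assumes "bij_betw F C X" "\<forall>a\<in>C. \<forall>b\<in>C. S a b = R (F a) (F b)"
  shows "isomorphic X R C S"
  unfolding isomorphic_def
proof (intro exI conjI ballI)
  show "bij_betw (inv_into C F) X C"
    by (rule bij_betw_inv_into[OF assms(1)])
  fix x y
  assume "x \<in> X" "y \<in> X"
  then show "R x y = S (inv_into C F x) (inv_into C F y)"
    using assms bij_betw_inv_into_right[OF assms(1)] bij_betw_apply[OF bij_betw_inv_into[OF assms(1)]]
    by metis
qed

lemma pulled_back_propagation:
  assumes qo: "quasi_order_on X R" and "finite Q'" and stable: "propagation_stable Q' n \<rho>"
    and F: "bij_betw F (prop_carrier Q' n) X"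
      "\<forall>a\<in>prop_carrier Q' n. \<forall>b\<in>prop_carrier Q' n. \<rho> a b = R (F a) (F b)"
    and gap: "\<forall>k<n. \<rho> (seed k 1) (seed k 2) = \<rho> (seed k 1) (seed k 3) \<and>
      \<rho> (seed k 2) (seed k 1) = \<rho> (seed k 3) (seed k 1)"
  shows "FA_foundational_quasi_order Q' n \<rho> \<and>
    (\<forall>k<n. seed_antichain \<rho> k \<or> seed_ascending \<rho> k \<or> seed_descending \<rho> k \<or> seed_scc \<rho> k) \<and>
    isomorphic X R (prop_carrier Q' n) (prop_rel \<rho>)"
proof (intro conjI allI impI)
  have "found_carrier Q' n \<subseteq> prop_carrier Q' n"
    by (auto simp: found_carrier_def prop_carrier_def)
  then have qo': "quasi_order_on (found_carrier Q' n) \<rho>"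
    using F bij_betw_apply[OF F(1)] by (intro quasi_order_on_pullback[OF qo, of F]) blast+
  then show "FA_foundational_quasi_order Q' n \<rho>"
    using propagation_stable_FA_foundational[OF \<open>finite Q'\<close> stable]
    by (simp add: FA_foundational_quasi_order_def)
  fix k
  assume "k < n"
  moreover have "seed k 1 \<in> found_carrier Q' n"
    using \<open>k < n\<close> by (simp add: found_carrier_def)
  ultimately show "seed_antichain \<rho> k \<or> seed_ascending \<rho> k \<or> seed_descending \<rho> k \<or> seed_scc \<rho> k"
    using qo' gap by (intro propagation_stable_seed_shape[OF stable]) (simp_all add: quasi_order_on_def)
next
  show "isomorphic X R (prop_carrier Q' n) (prop_rel \<rho>)"
    using F stable by (intro isomorphic_pullback[OF F(1)]) (simp add: propagation_stable_def)
qed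

lemma unary_FA_presentation_lasso:
  assumes "unary_FA_presentable X R"
  obtains L :: "nat set" and \<phi> T P where "\<phi> ` L = X" "0 < T" "T \<le> P"
    "lasso_invariant T P (\<lambda>x. x \<in> L)"
    "conv_lasso_invariant T P (\<lambda>u v. u \<in> L \<and> v \<in> L \<and> \<phi> u = \<phi> v)"
    "conv_lasso_invariant T P (\<lambda>u v. u \<in> L \<and> v \<in> L \<and> R (\<phi> u) (\<phi> v))"
proof -
  obtain L :: "nat set" and \<phi> T1 P1 T2 P2 T3 P3 where X: "\<phi> ` L = X"
    and "0 < P1" "lasso_invariant T1 P1 (\<lambda>x. x \<in> L)"
    and "0 < P2" "conv_lasso_invariant T2 P2 (\<lambda>u v. u \<in> L \<and> v \<in> L \<and> \<phi> u = \<phi> v)"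
    and "0 < P3" "conv_lasso_invariant T3 P3 (\<lambda>u v. u \<in> L \<and> v \<in> L \<and> R (\<phi> u) (\<phi> v))"
    using assms unfolding unary_FA_presentable_def regular_unary_iff regular_conv_iff by blast
  define T where "T = Suc (T1 + T2 + T3)"
  define P where "P = P1 * P2 * P3 * T"
  have "0 < P1 * P2 * P3"
    using \<open>0 < P1\<close> \<open>0 < P2\<close> \<open>0 < P3\<close> by simp
  then have P: "0 < P" and T: "0 < T" "T \<le> P"
    unfolding P_def using mult_le_mono1[of 1 "P1 * P2 * P3" T] by (simp_all add: T_def)
  have "T1 \<le> T" "T2 \<le> T" "T3 \<le> T"
    by (simp_all add: T_def)
  moreover have "P1 dvd P" "P2 dvd P" "P3 dvd P"
    unfolding P_def by (meson dvd_mult dvd_mult2 dvd_refl)+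
  ultimately show thesis
    using that[OF X T] lasso_invariant_refine[OF \<open>lasso_invariant T1 P1 _\<close> \<open>0 < P1\<close> P]
      conv_lasso_invariant_refine[OF \<open>conv_lasso_invariant T2 P2 _\<close> \<open>0 < P2\<close> P]
      conv_lasso_invariant_refine[OF \<open>conv_lasso_invariant T3 P3 _\<close> \<open>0 < P3\<close> P]
    by blast
qed

lemma unary_FA_presentable_imp_propagation:
  fixes X :: "'a set" and R :: "'a \<Rightarrow> 'a \<Rightarrow> bool"
  assumes qo: "quasi_order_on X R" and pres: "unary_FA_presentable X R"
  shows "\<exists>(Q'::nat set) (n::nat) (\<rho>::elt \<Rightarrow> elt \<Rightarrow> bool).
       FA_foundational_quasi_order Q' n \<rho> \<and>
       (\<forall>k<n. seed_antichain \<rho> k \<or> seed_ascending \<rho> k \<or>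
              seed_descending \<rho> k \<or> seed_scc \<rho> k) \<and>
       isomorphic X R (prop_carrier Q' n) (prop_rel \<rho>)"
proof -
  obtain L :: "nat set" and \<phi> T P where X: "\<phi> ` L = X" and T: "0 < T" "T \<le> P"
    and L: "lasso_invariant T P (\<lambda>x. x \<in> L)"
    and Eq: "conv_lasso_invariant T P (\<lambda>u v. u \<in> L \<and> v \<in> L \<and> \<phi> u = \<phi> v)"
    and R_inv: "conv_lasso_invariant T P (\<lambda>u v. u \<in> L \<and> v \<in> L \<and> R (\<phi> u) (\<phi> v))"
    by (rule unary_FA_presentation_lasso[OF pres])
  define Rel where "Rel = (\<lambda>u v. u \<in> L \<and> v \<in> L \<and> R (\<phi> u) (\<phi> v))"
  have Rel: "conv_lasso_invariant T P Rel"
    using R_inv by (simp add: Rel_def)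
  have P: "0 < P"
    using T by simp
  let ?L' = "least_reps L \<phi>"
  define N where "N = 2 * T + P"
  have "periodic_above N P ?L'"
    unfolding N_def by (rule least_reps_periodic[OF P T(1) L Eq])
  then obtain n r where r: "\<forall>k<n. r k < P"
    and code: "bij_betw (seed_code N P r) (prop_carrier {u \<in> ?L'. u < N} n) ?L'"
    by (rule periodic_set_seed_code[OF P])
  define Q' where "Q' = {u \<in> ?L'. u < N}"
  define \<rho> where "\<rho> = (\<lambda>a b. Rel (seed_code N P r a) (seed_code N P r b))"
  define F where "F = \<phi> \<circ> seed_code N P r"
  have "finite Q'"
    by (rule finite_subset[of _ "{..<N}"]) (auto simp: Q'_def)
  moreover have "propagation_stable Q' n \<rho>"
    unfolding \<rho>_def using T r
    by (intro seed_code_propagation_stable[OF Rel T(1)]) (auto simp: N_def Q'_def)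
  moreover have "bij_betw F (prop_carrier Q' n) X"
    unfolding F_def Q'_def using bij_betw_trans[OF code bij_betw_least_reps] X by simp
  moreover have "\<forall>a\<in>prop_carrier Q' n. \<forall>b\<in>prop_carrier Q' n. \<rho> a b = R (F a) (F b)"
    using bij_betw_apply[OF code] by (auto simp: \<rho>_def Rel_def F_def Q'_def least_reps_def)
  moreover have "\<rho> (seed k 1) (seed k 2) = \<rho> (seed k 1) (seed k 3) \<and>
      \<rho> (seed k 2) (seed k 1) = \<rho> (seed k 3) (seed k 1)" for k
    using conv_lasso_invariant_stretch[OF Rel T(1), of "N + r k" "N + r k + P" 1] T(2)
    by (simp add: \<rho>_def mult_2_right add.assoc)
  ultimately have "FA_foundational_quasi_order Q' n \<rho> \<and>
      (\<forall>k<n. seed_antichain \<rho> k \<or> seed_ascending \<rho> k \<or> seed_descending \<rho> k \<or> seed_scc \<rho> k) \<and>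
      isomorphic X R (prop_carrier Q' n) (prop_rel \<rho>)"
    by (intro pulled_back_propagation[OF qo]) blast+
  then show ?thesis
    by blast
qed

section \<open>From a propagation to a presentation\<close>

definition seed_decode :: "nat \<Rightarrow> nat \<Rightarrow> nat \<Rightarrow> elt" where
  "seed_decode M n x = (if x < M then Inl x else Inr ((x - M) mod n, (x - M) div n + 1))"

lemma bij_betw_seed_decode:
  assumes "\<forall>q\<in>Q'. q < M"
  shows "bij_betw (seed_decode M n) (Q' \<union> {x. M \<le> x \<and> 0 < n}) (prop_carrier Q' n)"
proof (rule bij_betw_byWitness[where f' = "seed_code M n id"])
  show "\<forall>x\<in>Q' \<union> {x. M \<le> x \<and> 0 < n}. seed_code M n id (seed_decode M n x) = x"
    by (auto simp: seed_decode_def)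
  show "\<forall>a\<in>prop_carrier Q' n. seed_decode M n (seed_code M n id a) = a"
    using assms by (auto simp: prop_carrier_def seed_decode_def)
  show "seed_decode M n ` (Q' \<union> {x. M \<le> x \<and> 0 < n}) \<subseteq> prop_carrier Q' n"
    using assms by (auto simp: seed_decode_def)
  show "seed_code M n id ` prop_carrier Q' n \<subseteq> Q' \<union> {x. M \<le> x \<and> 0 < n}"
    by (auto simp: prop_carrier_def)
qed

lemma seed_decode_add:
  assumes "M \<le> a" "0 < n"
  shows "seed_decode M n (a + d) =
    Inr (((a - M) mod n + d) mod n, (a - M) div n + 1 + ((a - M) mod n + d) div n)"
proof -
  obtain x where x: "a = M + x"
    using assms(1) le_Suc_ex by blast
  have "(x + d) mod n = (x mod n + d) mod n" "(x + d) div n = x div n + (x mod n + d) div n"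
    by (simp_all add: mod_add_left_eq div_add1_eq[of x d n] div_add1_eq[of "x mod n" d n])
  then show ?thesis
    by (simp add: seed_decode_def x)
qed

lemma seed_decode_prop_rel_low:
  assumes "a < M" "0 < n" "M + 2 * n \<le> d" "M + 2 * n \<le> d'" "d mod n = d' mod n"
  shows "prop_rel \<rho> (seed_decode M n a) (seed_decode M n (a + d)) =
      prop_rel \<rho> (seed_decode M n a) (seed_decode M n (a + d'))"
    "prop_rel \<rho> (seed_decode M n (a + d)) (seed_decode M n a) =
      prop_rel \<rho> (seed_decode M n (a + d')) (seed_decode M n a)"
proof -
  have "(a + d) mod n = (a + d') mod n"
    using assms(5) by (rule mod_add_cong[OF refl])
  then have "(a + d - M) mod n = (a + d' - M) mod n"
    using cong_diff_nat[of "a + d" "a + d'" n M M] assms(3,4) by (simp add: cong_def)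
  moreover have "(a + d - M) div n \<noteq> 0" "(a + d' - M) div n \<noteq> 0"
    using assms(2-4) by (simp_all add: div_eq_0_iff)
  ultimately show "prop_rel \<rho> (seed_decode M n a) (seed_decode M n (a + d)) =
      prop_rel \<rho> (seed_decode M n a) (seed_decode M n (a + d'))"
    "prop_rel \<rho> (seed_decode M n (a + d)) (seed_decode M n a) =
      prop_rel \<rho> (seed_decode M n (a + d')) (seed_decode M n a)"
    using assms(1,3,4) by (simp_all add: seed_decode_def)
qed

lemma seed_decode_prop_rel_high:
  assumes "M \<le> a" "M \<le> a'" "0 < n" "(a - M) mod n = (a' - M) mod n" "d mod n = d' mod n"
    "d = d' \<or> 2 * n \<le> d \<and> 2 * n \<le> d'"
  shows "prop_rel \<rho> (seed_decode M n a) (seed_decode M n (a + d)) =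
      prop_rel \<rho> (seed_decode M n a') (seed_decode M n (a' + d'))"
    "prop_rel \<rho> (seed_decode M n (a + d)) (seed_decode M n a) =
      prop_rel \<rho> (seed_decode M n (a' + d')) (seed_decode M n a')"
proof -
  define k where "k = (a - M) mod n"
  define e e' where "e = (k + d) div n" and "e' = (k + d') div n"
  have decode: "seed_decode M n a = seed k ((a - M) div n + 1)"
    "seed_decode M n a' = seed k ((a' - M) div n + 1)"
    "seed_decode M n (a + d) = seed ((k + d) mod n) ((a - M) div n + 1 + e)"
    "seed_decode M n (a' + d') = seed ((k + d') mod n) ((a' - M) div n + 1 + e')"
    using assms(1-4) seed_decode_add[OF assms(1,3), of d] seed_decode_add[OF assms(2,3), of d']
    by (simp_all add: seed_decode_def k_def e_def e'_def)
  have "(k + d) mod n = (k + d') mod n"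
    using assms(5) by (rule mod_add_cong[OF refl])
  moreover have "(e = 0 \<longleftrightarrow> e' = 0) \<and> (e = 1 \<longleftrightarrow> e' = 1)"
  proof (cases "d = d'")
    case False
    then have "2 * n \<le> k + d" "2 * n \<le> k + d'"
      using assms(6) by auto
    then have "2 \<le> e" "2 \<le> e'"
      using assms(3) div_le_mono[of "2 * n" _ n] by (simp_all add: e_def e'_def)
    then show ?thesis
      by simp
  qed (simp add: e_def e'_def)
  ultimately show "prop_rel \<rho> (seed_decode M n a) (seed_decode M n (a + d)) =
      prop_rel \<rho> (seed_decode M n a') (seed_decode M n (a' + d'))"
    "prop_rel \<rho> (seed_decode M n (a + d)) (seed_decode M n a) =
      prop_rel \<rho> (seed_decode M n (a' + d')) (seed_decode M n a')"
    unfolding decode prop_rel_seed_offset by simp_all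
qed

lemma seed_decode_prop_rel_ordered:
  assumes "a \<le> b" "a' \<le> b'"
    and eq: "lasso (M + 2 * n + 1) (max 1 n) a = lasso (M + 2 * n + 1) (max 1 n) a'"
      "lasso (M + 2 * n + 1) (max 1 n) (b - a) = lasso (M + 2 * n + 1) (max 1 n) (b' - a')"
    and "a < M \<or> 0 < n" "b < M \<or> 0 < n"
  shows "prop_rel \<rho> (seed_decode M n a) (seed_decode M n b) =
      prop_rel \<rho> (seed_decode M n a') (seed_decode M n b') \<and>
    prop_rel \<rho> (seed_decode M n b) (seed_decode M n a) =
      prop_rel \<rho> (seed_decode M n b') (seed_decode M n a')"
proof -
  define T P where "T = M + 2 * n + 1" and "P = max 1 n"
  define d d' where "d = b - a" and "d' = b' - a'"
  have b: "b = a + d" "b' = a' + d'"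
    using assms(1,2) by (simp_all add: d_def d'_def)
  have P_n: "P = n" if "0 < n"
    using that by (simp add: P_def)
  have a_cases: "a = a' \<or> T \<le> a \<and> T \<le> a' \<and> a mod P = a' mod P"
    and d_cases: "d = d' \<or> T \<le> d \<and> T \<le> d' \<and> d mod P = d' mod P"
    using eq lasso_eq_iff[of P T] by (simp_all add: T_def P_def d_def d'_def)
  show ?thesis
  proof (cases "a < M")
    case True
    then have "a' = a"
      using a_cases by (auto simp: T_def)
    show ?thesis
    proof (cases "d = d'")
      case False
      with d_cases have d: "M + 2 * n \<le> d" "M + 2 * n \<le> d'" "d mod P = d' mod P"
        by (auto simp: T_def)
      then have "0 < n"
        using assms(6) b(1) by auto
      then show ?thesis
        using seed_decode_prop_rel_low[OF True _ d(1,2)] d(3) b \<open>a' = a\<close> P_n by simp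
    qed (simp add: b \<open>a' = a\<close>)
  next
    case False
    then have n: "0 < n" and high: "M \<le> a" "M \<le> a'"
      using assms(5) a_cases by (auto simp: T_def)
    have "(a - M) mod n = (a' - M) mod n"
      using a_cases cong_diff_nat[of a a' n M M] high P_n[OF n] by (auto simp: cong_def)
    moreover have "d mod n = d' mod n" "d = d' \<or> 2 * n \<le> d \<and> 2 * n \<le> d'"
      using d_cases P_n[OF n] by (auto simp: T_def)
    ultimately show ?thesis
      unfolding b using seed_decode_prop_rel_high[OF high n, of d d' \<rho>] by simp
  qed
qed

lemma propagation_imp_unary_FA_presentable:
  fixes X :: "'a set" and R :: "'a \<Rightarrow> 'a \<Rightarrow> bool"
  assumes "finite Q'" "isomorphic X R (prop_carrier Q' n) (prop_rel \<rho>)"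
  shows "unary_FA_presentable X R"
proof -
  obtain f where f: "bij_betw f X (prop_carrier Q' n)"
    and R: "\<forall>x\<in>X. \<forall>y\<in>X. R x y \<longleftrightarrow> prop_rel \<rho> (f x) (f y)"
    using assms(2) unfolding isomorphic_def by blast
  obtain M where M: "\<forall>q\<in>Q'. q < M"
    using assms(1) finite_nat_set_iff_bounded by blast
  define L where "L = Q' \<union> {x. M \<le> x \<and> 0 < n}"
  define T P where "T = M + 2 * n + 1" and "P = max 1 n"
  have P: "0 < P" and T: "0 < T"
    by (simp_all add: P_def T_def)
  let ?dec = "seed_decode M n"
  define \<phi> where "\<phi> = inv_into X f \<circ> ?dec"
  have dec: "bij_betw ?dec L (prop_carrier Q' n)"
    unfolding L_def by (rule bij_betw_seed_decode[OF M])
  then have \<phi>: "bij_betw \<phi> L X"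
    unfolding \<phi>_def using bij_betw_trans bij_betw_inv_into[OF f] by blast
  have R_\<phi>: "R (\<phi> u) (\<phi> v) \<longleftrightarrow> prop_rel \<rho> (?dec u) (?dec v)" if "u \<in> L" "v \<in> L" for u v
    using R bij_betw_apply[OF \<phi>] bij_betw_apply[OF dec] that f
    by (simp add: \<phi>_def bij_betw_inv_into_right)
  have L_low: "x < M \<or> 0 < n" if "x \<in> L" for x
    using that M by (auto simp: L_def)
  have "x \<in> L \<longleftrightarrow> y \<in> L" if "lasso T P x = lasso T P y" for x y
    using that M lasso_eq_iff[OF P] by (fastforce simp: L_def T_def)
  then have L: "lasso_invariant T P (\<lambda>x. x \<in> L)"
    unfolding lasso_invariant_def by blast
  have rel: "conv_lasso_invariant T P (\<lambda>u v. u \<in> L \<and> v \<in> L \<and> prop_rel \<rho> (?dec u) (?dec v))"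
  proof (rule conv_lasso_invariant_restrict[OF P L])
    fix u v u' v'
    assume "u \<in> L" "v \<in> L" "u \<le> v" "u' \<le> v'"
      and "lasso T P u = lasso T P u'" "lasso T P (v - u) = lasso T P (v' - u')"
    then show "prop_rel \<rho> (?dec u) (?dec v) = prop_rel \<rho> (?dec u') (?dec v') \<and>
        prop_rel \<rho> (?dec v) (?dec u) = prop_rel \<rho> (?dec v') (?dec u')"
      using L_low unfolding T_def P_def by (intro seed_decode_prop_rel_ordered) simp_all
  qed
  have "\<phi> u = \<phi> v \<longleftrightarrow> u = v" if "u \<in> L" "v \<in> L" for u v
    using bij_betw_imp_inj_on[OF \<phi>] that by (meson inj_onD)
  then have Eq: "{conv u v | u v. u \<in> L \<and> v \<in> L \<and> \<phi> u = \<phi> v} =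
      {conv u v | u v. u \<in> L \<and> v \<in> L \<and> u = v}"
    by auto
  have Rel: "{conv u v | u v. u \<in> L \<and> v \<in> L \<and> R (\<phi> u) (\<phi> v)} =
      {conv u v | u v. u \<in> L \<and> v \<in> L \<and> prop_rel \<rho> (?dec u) (?dec v)}"
    using R_\<phi> by auto
  have "regular_lang {conv u v | u v. u \<in> L \<and> v \<in> L \<and> \<phi> u = \<phi> v}"
    "regular_lang {conv u v | u v. u \<in> L \<and> v \<in> L \<and> R (\<phi> u) (\<phi> v)}"
    unfolding Eq Rel regular_conv_iff using P conv_lasso_invariant_diag[OF T P L] rel by blast+
  moreover have "regular_lang (unary_word ` L)"
    using P L unfolding regular_unary_iff by blast
  ultimately show ?thesis
    unfolding unary_FA_presentable_def using bij_betw_imp_surj_on[OF \<phi>] by blast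
qed

lemma FA_foundational_quasi_order_finite: "FA_foundational_quasi_order Q' n \<rho> \<Longrightarrow> finite Q'"
  by (simp add: FA_foundational_quasi_order_def FA_foundational_def)

theorem theorem5p8:
  fixes X :: "'a set" and R :: "'a \<Rightarrow> 'a \<Rightarrow> bool"
  assumes "quasi_order_on X R"
  shows "unary_FA_presentable X R \<longleftrightarrow>
    (\<exists>(Q'::nat set) (n::nat) (\<rho>::elt \<Rightarrow> elt \<Rightarrow> bool).
       FA_foundational_quasi_order Q' n \<rho> \<and>
       (\<forall>k<n. seed_antichain \<rho> k \<or> seed_ascending \<rho> k \<or>
              seed_descending \<rho> k \<or> seed_scc \<rho> k) \<and>
       isomorphic X R (prop_carrier Q' n) (prop_rel \<rho>))"
    (is "_ \<longleftrightarrow> ?propagation")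
proof
  assume "unary_FA_presentable X R"
  with assms show ?propagation
    by (rule unary_FA_presentable_imp_propagation)
next
  assume ?propagation
  then obtain Q' n \<rho> where "FA_foundational_quasi_order Q' n \<rho>"
    and "isomorphic X R (prop_carrier Q' n) (prop_rel \<rho>)"
    by blast
  then show "unary_FA_presentable X R"
    using propagation_imp_unary_FA_presentable FA_foundational_quasi_order_finite by blast
qed

end
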